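(* Let $(\mathcal{H}, p_0, \mathcal{Z}, T, \mathcal{Y}, O)$ be a learning POMDP, let $h^* \in \mathcal{H}$ be a target hypothesis, let $0<\lambda\le 1$ be a teaching performance and let $t^*\in\mathbb{N}_{\ge 1}$ be a pre-set number of trials. Let $\mathcal{B}_f=\{b\in\mathcal{B} : b(h^* )<\lambda\}$. Suppose there exists a function $B:\mathbb{N}\times\mathcal{B}\to\mathbb{R}$ (a barrier certificate) such that (i) $B(t^*,b)>0$ for all $b\in\mathcal{B}_f$; (ii) $B(0,p_0)<0$; (iii) $B\big(t,f_z(b,y)\big)-B(t-1,b)\le 0$ for all $t\in\{1,\dots,t^*\}$, all $z\in\mathcal{Z}$, all $y\in\mathcal{Y}$ and all $b\in\mathcal{B}$. Then the teaching performance $\lambda$ is satisfied: for every sequence of examples $z_0,\dots,z_{t^*-1}\in\mathcal{Z}$ and observations $y_1,\dots,y_{t^*}\in\mathcal{Y}$, the belief trajectory $b_0=p_0$, $b_t=f_{z_{t-1}}(b_{t-1},y_t)$ satisfies $b_{t^*}(h^* )\ge\lambda$.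
   Context: A learning POMDP is a tuple $(\mathcal{H}, p_0, \mathcal{Z}, T, \mathcal{Y}, O)$ where $\mathcal{H}$ is a finite set of hypotheses (hidden states), $\mathcal{Z}$ a finite set of labelled examples (actions), $\mathcal{Y}$ a finite set of observations (labels), $p_0$ an initial probability distribution on $\mathcal{H}$, $T(h,z,h')\in[0,1]$ the probability of transitioning from hypothesis $h$ to $h'$ when shown example $z$ (in the paper induced by the learner's preference function), and $O(y\mid h',z)\in[0,1]$ the probability of observation $y$ given hypothesis $h'$ and example $z$. $\mathcal{B}$ denotes the unit simplex of probability vectors (beliefs) on $\mathcal{H}$. For $z\in\mathcal{Z}$, $y\in\mathcal{Y}$, the belief update map $f_z(\cdot,y):\mathcal{B}\to\mathcal{B}$ has components $$f_z^{h'}(b,y)=\frac{O(y\mid h',z)\sum_{h\in\mathcal{H}}T(h,z,h')b(h)}{\sum_{h''\in\mathcal{H}}O(y\mid h'',z)\sum_{h\in\mathcal{H}}T(h,z,h'')b(h)},\qquad h'\in\mathcal{H}.$$ The belief dynamics is the discrete-time switched system $b_t=f_{z}(b_{t-1},y_t)$, $b_0=p_0$, with the example $z$ acting as the switching mode and $y_t$ as input. *)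

theory Defs
  imports Complex_Main
begin

definition beliefs :: "('h::finite \<Rightarrow> real) set" where
  "beliefs = {b. (\<forall>h. 0 \<le> b h) \<and> (\<Sum>h\<in>UNIV. b h) = 1}"

definition belief_update ::
  "('h::finite \<Rightarrow> 'z \<Rightarrow> 'h \<Rightarrow> real) \<Rightarrow> ('y \<Rightarrow> 'h \<Rightarrow> 'z \<Rightarrow> real)
   \<Rightarrow> 'z \<Rightarrow> ('h \<Rightarrow> real) \<Rightarrow> 'y \<Rightarrow> ('h \<Rightarrow> real)" where
  "belief_update T Obs z b y = (\<lambda>h'.
     (Obs y h' z * (\<Sum>h\<in>UNIV. T h z h' * b h)) /
     (\<Sum>h''\<in>UNIV. Obs y h'' z * (\<Sum>h\<in>UNIV. T h z h'' * b h)))"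

fun belief_traj ::
  "('h::finite \<Rightarrow> 'z \<Rightarrow> 'h \<Rightarrow> real) \<Rightarrow> ('y \<Rightarrow> 'h \<Rightarrow> 'z \<Rightarrow> real) \<Rightarrow> ('h \<Rightarrow> real)
   \<Rightarrow> (nat \<Rightarrow> 'z) \<Rightarrow> (nat \<Rightarrow> 'y) \<Rightarrow> nat \<Rightarrow> ('h \<Rightarrow> real)" where
  "belief_traj T Obs p0 zs ys 0 = p0"
| "belief_traj T Obs p0 zs ys (Suc t) =
     belief_update T Obs (zs t) (belief_traj T Obs p0 zs ys t) (ys (Suc t))"

end

theory Submission
  imports Defs
begin

text \<open>Every belief along the trajectory stays in the simplex, and along it the barrier certificate
  never increases, so its value at time tstar is below the negative initial value. A belief
  with b hstar < lam would make that value positive.\<close>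

lemma belief_update_in_beliefs:
  fixes T :: "'h::finite \<Rightarrow> 'z \<Rightarrow> 'h \<Rightarrow> real"
  assumes b: "b \<in> beliefs"
    and T_nonneg: "\<And>h h'. 0 \<le> T h z h'"
    and Obs_nonneg: "\<And>h'. 0 \<le> Obs y h' z"
    and normalizer_nonzero: "(\<Sum>h''\<in>UNIV. Obs y h'' z * (\<Sum>h\<in>UNIV. T h z h'' * b h)) \<noteq> 0"
  shows "belief_update T Obs z b y \<in> beliefs"
proof -
  have "\<And>h. 0 \<le> b h" using b by (simp add: beliefs_def)
  then have numerator_nonneg: "\<And>h'. 0 \<le> Obs y h' z * (\<Sum>h\<in>UNIV. T h z h' * b h)"
    using Obs_nonneg T_nonneg by (simp add: sum_nonneg)
  then have "0 \<le> (\<Sum>h''\<in>UNIV. Obs y h'' z * (\<Sum>h\<in>UNIV. T h z h'' * b h))"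
    by (rule sum_nonneg)
  with numerator_nonneg normalizer_nonzero show ?thesis
    unfolding beliefs_def belief_update_def by (simp add: sum_divide_distrib[symmetric])
qed

lemma belief_traj_in_beliefs:
  fixes T :: "'h::finite \<Rightarrow> 'z \<Rightarrow> 'h \<Rightarrow> real"
  assumes "p0 \<in> beliefs"
    and "\<And>h z h'. 0 \<le> T h z h'"
    and "\<And>y h' z. 0 \<le> Obs y h' z"
    and "\<And>b z y. b \<in> beliefs \<Longrightarrow>
         (\<Sum>h''\<in>UNIV. Obs y h'' z * (\<Sum>h\<in>UNIV. T h z h'' * b h)) \<noteq> 0"
  shows "belief_traj T Obs p0 zs ys t \<in> beliefs"
  by (induction t) (simp_all add: assms belief_update_in_beliefs)

lemma nonincreasing_along_trajectory:
  fixes B :: "nat \<Rightarrow> 'a \<Rightarrow> real"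
  assumes "\<And>t. t < n \<Longrightarrow> B (Suc t) (x (Suc t)) \<le> B t (x t)"
  shows "B n (x n) \<le> B 0 (x 0)"
  using assms by (induction n) force+

theorem theorem1:
  fixes T :: "'h::finite \<Rightarrow> 'z::finite \<Rightarrow> 'h \<Rightarrow> real"
    and Obs :: "'y::finite \<Rightarrow> 'h \<Rightarrow> 'z \<Rightarrow> real"
    and p0 :: "'h \<Rightarrow> real"
    and hstar :: 'h
    and lam :: real
    and tstar :: nat
    and Bc :: "nat \<Rightarrow> ('h \<Rightarrow> real) \<Rightarrow> real"
    and zs :: "nat \<Rightarrow> 'z" and ys :: "nat \<Rightarrow> 'y"
  assumes p0: "p0 \<in> beliefs"
    and T01: "\<And>h z h'. 0 \<le> T h z h' \<and> T h z h' \<le> 1"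
    and O01: "\<And>y h' z. 0 \<le> Obs y h' z \<and> Obs y h' z \<le> 1"
    and welldef: "\<And>b z y. b \<in> beliefs \<Longrightarrow>
         (\<Sum>h''\<in>UNIV. Obs y h'' z * (\<Sum>h\<in>UNIV. T h z h'' * b h)) \<noteq> 0"
    and lam: "0 < lam" "lam \<le> 1"
    and tstar: "1 \<le> tstar"
    and i: "\<And>b. b \<in> {b \<in> beliefs. b hstar < lam} \<Longrightarrow> Bc tstar b > 0"
    and ii: "Bc 0 p0 < 0"
    and iii: "\<And>t z y b. t \<in> {1..tstar} \<Longrightarrow> b \<in> beliefs \<Longrightarrow>
         Bc t (belief_update T Obs z b y) - Bc (t - 1) b \<le> 0"
  shows "belief_traj T Obs p0 zs ys tstar hstar \<ge> lam"
proof -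
  let ?b = "belief_traj T Obs p0 zs ys"
  have in_beliefs: "?b t \<in> beliefs" for t
    using p0 T01 O01 welldef by (intro belief_traj_in_beliefs) auto
  have "Bc (Suc t) (?b (Suc t)) \<le> Bc t (?b t)" if "t < tstar" for t
    using iii[of "Suc t" "?b t" "zs t" "ys (Suc t)"] in_beliefs that by simp
  then have "Bc tstar (?b tstar) \<le> Bc 0 (?b 0)"
    by (rule nonincreasing_along_trajectory)
  with ii have "\<not> Bc tstar (?b tstar) > 0"
    by simp
  with i in_beliefs show ?thesis
    by force
qed

end
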